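(* Let $k\ge 2$, $n\ge1$, and let $L_n$ and $\varphi:L_n\to E^{n-1}$ be as in the context. Then $\varphi$ is a bijection.
   Context: $E=\{0,\dots,k-1\}$. For $\mathbf a\in E^n$, $w(\mathbf a)=a_1+\dots+a_n$, and $\mathcal B_t=\{\mathbf a\in E^n: w(\mathbf a)=t\}$. Let $g=\lfloor n(k-1)/2\rfloor$ and $C_i=\{\mathbf a\in E^n: a_1=i\}$. Define $L_n=(\mathcal B_0\cup\dots\cup\mathcal B_g)\cap(C_0\cup C_{k-1})$ if $n(k-1)$ is odd, and $L_n=((\mathcal B_0\cup\dots\cup\mathcal B_{g-1})\cap(C_0\cup C_{k-1}))\cup(\mathcal B_g\cap C_0)$ if $n(k-1)$ is even. For $a\in E$ let $\overline a=k-1-a$. Define $\varphi(a_1,\dots,a_n)=(a_2,\dots,a_n)$ if $a_1=0$ and $\varphi(a_1,\dots,a_n)=(\overline{a}_2,\dots,\overline{a}_n)$ if $a_1=k-1$. *)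

theory Defs
  imports Main
begin

text \<open>Elements of E^n are lists of length n with entries in E = {0,...,k-1};
  the first list entry is a_1.\<close>

definition Evec :: "nat \<Rightarrow> nat \<Rightarrow> nat list set" where
  "Evec k n = {a. length a = n \<and> (\<forall>x\<in>set a. x < k)}"

definition wt :: "nat list \<Rightarrow> nat" where
  "wt a = sum_list a"

definition Bset :: "nat \<Rightarrow> nat \<Rightarrow> nat \<Rightarrow> nat list set" where
  "Bset k n t = {a \<in> Evec k n. wt a = t}"

definition Cset :: "nat \<Rightarrow> nat \<Rightarrow> nat \<Rightarrow> nat list set" where
  "Cset k n i = {a \<in> Evec k n. hd a = i}"

definition gval :: "nat \<Rightarrow> nat \<Rightarrow> nat" where
  "gval k n = (n * (k - 1)) div 2"

definition Lset :: "nat \<Rightarrow> nat \<Rightarrow> nat list set" where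
  "Lset k n =
    (if odd (n * (k - 1))
     then (\<Union>t\<in>{0..gval k n}. Bset k n t) \<inter> (Cset k n 0 \<union> Cset k n (k - 1))
     else ((\<Union>t\<in>{0..<gval k n}. Bset k n t) \<inter> (Cset k n 0 \<union> Cset k n (k - 1)))
          \<union> (Bset k n (gval k n) \<inter> Cset k n 0))"

definition cbar :: "nat \<Rightarrow> nat \<Rightarrow> nat" where
  "cbar k a = k - 1 - a"

definition phi :: "nat \<Rightarrow> nat list \<Rightarrow> nat list" where
  "phi k a = (if hd a = 0 then tl a else map (cbar k) (tl a))"

end

theory Submission
  imports Defs
begin

text \<open>Complementing every entry of a word of length m turns its weight w into m(k-1) - w.
  With N = n(k-1), the parity case split in the definition of L_n just says 2 w(a) \<le> N if
  a_1 = 0 and 2 w(a) < N if a_1 = k-1. So a word b of length n-1 has exactly one preimage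
  under phi in L_n: 0 # b when 2 w(b) \<le> N, and otherwise (k-1) followed by the complement
  of b, whose weight N - w(b) is below N/2 precisely then.\<close>

lemma cbar_cbar: "x < k \<Longrightarrow> cbar k (cbar k x) = x"
  by (simp add: cbar_def)

lemma map_cbar_cbar: "b \<in> Evec k m \<Longrightarrow> map (cbar k) (map (cbar k) b) = b"
  by (auto simp: Evec_def cbar_cbar intro!: map_idI)

lemma map_cbar_in_Evec: "b \<in> Evec k m \<Longrightarrow> map (cbar k) b \<in> Evec k m"
  by (auto simp: Evec_def cbar_def)

lemma wt_Cons [simp]: "wt (x # b) = x + wt b"
  by (simp add: wt_def)

lemma wt_map_cbar_add_wt:
  "b \<in> Evec k m \<Longrightarrow> wt (map (cbar k) b) + wt b = m * (k - 1)"
proof (induction b arbitrary: m)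
  case Nil
  then show ?case by (simp add: Evec_def wt_def)
next
  case (Cons x b)
  then obtain m' where "m = Suc m'" "b \<in> Evec k m'" "x < k"
    by (auto simp: Evec_def)
  with Cons.IH show ?case by (simp add: cbar_def)
qed

lemma Lset_eq:
  "Lset k n = {a \<in> Evec k n.
     hd a = 0 \<and> 2 * wt a \<le> n * (k - 1) \<or> hd a = k - 1 \<and> 2 * wt a < n * (k - 1)}"
proof -
  define N where "N = n * (k - 1)"
  have "w \<le> N div 2 \<longleftrightarrow> 2 * w \<le> N"
    and "w < N div 2 \<or> odd N \<and> w = N div 2 \<longleftrightarrow> 2 * w < N" for w
    by presburger+
  then show ?thesis
    unfolding Lset_def Bset_def Cset_def gval_def N_def[symmetric] by auto
qed

definition phi_inv :: "nat \<Rightarrow> nat list \<Rightarrow> nat list" where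
  "phi_inv k b =
    (if 2 * wt b \<le> Suc (length b) * (k - 1) then 0 # b else (k - 1) # map (cbar k) b)"

lemma phi_phi_inv:
  assumes "k \<ge> 2" and "b \<in> Evec k m"
  shows "phi k (phi_inv k b) = b"
  using assms map_cbar_cbar[OF assms(2)] by (simp add: phi_inv_def phi_def)

lemma Lset_SucE:
  assumes "a \<in> Lset k (Suc m)"
  obtains b where "a = 0 # b" "b \<in> Evec k m" "2 * wt b \<le> Suc m * (k - 1)"
    | b where "a = (k - 1) # b" "b \<in> Evec k m" "2 * (k - 1 + wt b) < Suc m * (k - 1)"
  using assms unfolding Lset_eq by (cases a) (auto simp: Evec_def)

lemma phi_in_Evec:
  assumes "a \<in> Lset k (Suc m)"
  shows "phi k a \<in> Evec k m"
  using assms by (cases rule: Lset_SucE) (auto simp: phi_def map_cbar_in_Evec)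

lemma phi_inv_in_Lset:
  assumes "k \<ge> 2" and b: "b \<in> Evec k m"
  shows "phi_inv k b \<in> Lset k (Suc m)"
proof -
  have "length b = m" "0 # b \<in> Evec k (Suc m)" "(k - 1) # map (cbar k) b \<in> Evec k (Suc m)"
    using assms map_cbar_in_Evec[OF b] by (auto simp: Evec_def)
  moreover have "wt (map (cbar k) b) + wt b = m * (k - 1)"
    using wt_map_cbar_add_wt[OF b] .
  ultimately show ?thesis
    using assms(1) unfolding phi_inv_def Lset_eq by auto
qed

lemma phi_inv_phi:
  assumes "k \<ge> 2" and "a \<in> Lset k (Suc m)"
  shows "phi_inv k (phi k a) = a"
  using assms(2)
proof (cases rule: Lset_SucE)
  case (1 b)
  then show ?thesis by (simp add: phi_def phi_inv_def Evec_def)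
next
  case (2 b)
  have "phi k a = map (cbar k) b"
    using 2(1) assms(1) by (simp add: phi_def)
  moreover have "\<not> 2 * wt (map (cbar k) b) \<le> Suc m * (k - 1)"
    using wt_map_cbar_add_wt[OF 2(2)] 2(3) by simp
  ultimately show ?thesis
    using 2 map_cbar_cbar[OF 2(2)] by (simp add: phi_inv_def Evec_def)
qed

theorem corollary1:
  fixes k n :: nat
  assumes "k \<ge> 2" and "n \<ge> 1"
  shows "bij_betw (phi k) (Lset k n) (Evec k (n - 1))"
proof -
  obtain m where n: "n = Suc m"
    using assms(2) by (cases n) auto
  show ?thesis
    unfolding n diff_Suc_1
  proof (rule bij_betw_byWitness[where f' = "phi_inv k"])
    show "\<forall>a\<in>Lset k (Suc m). phi_inv k (phi k a) = a"
      using phi_inv_phi[OF assms(1)] by blast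
    show "\<forall>b\<in>Evec k m. phi k (phi_inv k b) = b"
      using phi_phi_inv[OF assms(1)] by blast
    show "phi k ` Lset k (Suc m) \<subseteq> Evec k m"
      using phi_in_Evec by blast
    show "phi_inv k ` Evec k m \<subseteq> Lset k (Suc m)"
      using phi_inv_in_Lset[OF assms(1)] by blast
  qed
qed

end
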